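(* Consider an RBM with observed variables $X\in\{-1,1\}^n$ and parameters $J,h,g$ as in the context. Fix an observed variable $u$ and subsets $I,S\subseteq[n]$ such that $\{u\},I,S$ are pairwise disjoint, and assignments $x_u,x_I,x_S$. Then \[\nu_{u,I|S}(x_u,x_I|x_S)=\Big|\sum_{q\in\{-1,1\}^m}\bar f(q,x_u,x_S)\prod_{i\in I}\sigma(2x_i(J^{(i)}\cdot q+h_i))\Big|,\] where \[\bar f(q,x_u,x_S)=\lambda(q,x_S)\Big[\sigma(2x_u(J^{(u)}\cdot q+h_u))-\mathbb{E}_{q'\sim\lambda(\cdot,x_S)}\sigma(2x_u(J^{(u)}\cdot q'+h_u))\Big],\] \[\lambda(q,x_S)=\frac{e^{g\cdot q}\prod_{i\in S}e^{x_i(J^{(i)}\cdot q+h_i)}\prod_{i\in[n]\setminus S}\cosh(J^{(i)}\cdot q+h_i)}{\sum_{q'\in\{-1,1\}^m}e^{g\cdot q'}\prod_{i\in S}e^{x_i(J^{(i)}\cdot q'+h_i)}\prod_{i\in[n]\setminus S}\cosh(J^{(i)}\cdot q'+h_i)}.\]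
   Context: RBM: $\mathbb{P}(X=x,Y=y)\propto\exp(x^TJy+h^Tx+g^Ty)$ over observed $X\in\{-1,1\}^n$, latent $Y\in\{-1,1\}^m$, $J\in\mathbb{R}^{n\times m}$, $h\in\mathbb{R}^n$, $g\in\mathbb{R}^m$; probabilities refer to the marginal of $X$. $J^{(i)}$ is the $i$-th row of $J$, $\sigma(t)=1/(1+e^{-t})$. $\nu_{u,I|S}(x_u,x_I|x_S):=|\mathbb{P}(X_u=x_u,X_I=x_I|X_S=x_S)-\mathbb{P}(X_u=x_u|X_S=x_S)\mathbb{P}(X_I=x_I|X_S=x_S)|$. $\mathbb{E}_{q'\sim\lambda(\cdot,x_S)}$ denotes expectation over $q'\in\{-1,1\}^m$ drawn with probability $\lambda(q',x_S)$. *)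

theory Defs
  imports Complex_Main "HOL-Library.FuncSet"
begin

definition spins :: "nat \<Rightarrow> (nat \<Rightarrow> real) set" where
  "spins k = ({0..<k} \<rightarrow>\<^sub>E {-1, 1})"

definition sigmoid :: "real \<Rightarrow> real" where
  "sigmoid t = 1 / (1 + exp (- t))"

definition row_dot :: "nat \<Rightarrow> (nat \<Rightarrow> nat \<Rightarrow> real) \<Rightarrow> nat \<Rightarrow> (nat \<Rightarrow> real) \<Rightarrow> real" where
  "row_dot m J i q = (\<Sum>j<m. J i j * q j)"

definition rbm_weight ::
  "nat \<Rightarrow> nat \<Rightarrow> (nat \<Rightarrow> nat \<Rightarrow> real) \<Rightarrow> (nat \<Rightarrow> real) \<Rightarrow> (nat \<Rightarrow> real)
   \<Rightarrow> (nat \<Rightarrow> real) \<Rightarrow> (nat \<Rightarrow> real) \<Rightarrow> real" where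
  "rbm_weight n m J h g x y =
     exp ((\<Sum>i<n. \<Sum>j<m. x i * J i j * y j) + (\<Sum>i<n. h i * x i) + (\<Sum>j<m. g j * y j))"

definition rbm_prob ::
  "nat \<Rightarrow> nat \<Rightarrow> (nat \<Rightarrow> nat \<Rightarrow> real) \<Rightarrow> (nat \<Rightarrow> real) \<Rightarrow> (nat \<Rightarrow> real)
   \<Rightarrow> ((nat \<Rightarrow> real) \<Rightarrow> bool) \<Rightarrow> real" where
  "rbm_prob n m J h g E =
     (\<Sum>x\<in>{x\<in>spins n. E x}. \<Sum>y\<in>spins m. rbm_weight n m J h g x y) /
     (\<Sum>x\<in>spins n. \<Sum>y\<in>spins m. rbm_weight n m J h g x y)"

definition rbm_cond ::
  "nat \<Rightarrow> nat \<Rightarrow> (nat \<Rightarrow> nat \<Rightarrow> real) \<Rightarrow> (nat \<Rightarrow> real) \<Rightarrow> (nat \<Rightarrow> real)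
   \<Rightarrow> ((nat \<Rightarrow> real) \<Rightarrow> bool) \<Rightarrow> ((nat \<Rightarrow> real) \<Rightarrow> bool) \<Rightarrow> real" where
  "rbm_cond n m J h g E F =
     rbm_prob n m J h g (\<lambda>x. E x \<and> F x) / rbm_prob n m J h g F"

definition rbm_nu ::
  "nat \<Rightarrow> nat \<Rightarrow> (nat \<Rightarrow> nat \<Rightarrow> real) \<Rightarrow> (nat \<Rightarrow> real) \<Rightarrow> (nat \<Rightarrow> real)
   \<Rightarrow> nat \<Rightarrow> nat set \<Rightarrow> nat set \<Rightarrow> real \<Rightarrow> (nat \<Rightarrow> real) \<Rightarrow> (nat \<Rightarrow> real) \<Rightarrow> real" where
  "rbm_nu n m J h g u I S xu xI xS =
     (let EU = (\<lambda>x. x u = xu); EI = (\<lambda>x. \<forall>i\<in>I. x i = xI i); ES = (\<lambda>x. \<forall>i\<in>S. x i = xS i)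
      in \<bar>rbm_cond n m J h g (\<lambda>x. EU x \<and> EI x) ES
           - rbm_cond n m J h g EU ES * rbm_cond n m J h g EI ES\<bar>)"

definition lam_num ::
  "nat \<Rightarrow> nat \<Rightarrow> (nat \<Rightarrow> nat \<Rightarrow> real) \<Rightarrow> (nat \<Rightarrow> real) \<Rightarrow> (nat \<Rightarrow> real)
   \<Rightarrow> nat set \<Rightarrow> (nat \<Rightarrow> real) \<Rightarrow> (nat \<Rightarrow> real) \<Rightarrow> real" where
  "lam_num n m J h g S xS q =
     exp (\<Sum>j<m. g j * q j)
     * (\<Prod>i\<in>S. exp (xS i * (row_dot m J i q + h i)))
     * (\<Prod>i\<in>{0..<n} - S. cosh (row_dot m J i q + h i))"

definition lam ::
  "nat \<Rightarrow> nat \<Rightarrow> (nat \<Rightarrow> nat \<Rightarrow> real) \<Rightarrow> (nat \<Rightarrow> real) \<Rightarrow> (nat \<Rightarrow> real)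
   \<Rightarrow> nat set \<Rightarrow> (nat \<Rightarrow> real) \<Rightarrow> (nat \<Rightarrow> real) \<Rightarrow> real" where
  "lam n m J h g S xS q =
     lam_num n m J h g S xS q / (\<Sum>q'\<in>spins m. lam_num n m J h g S xS q')"

definition fbar ::
  "nat \<Rightarrow> nat \<Rightarrow> (nat \<Rightarrow> nat \<Rightarrow> real) \<Rightarrow> (nat \<Rightarrow> real) \<Rightarrow> (nat \<Rightarrow> real)
   \<Rightarrow> nat \<Rightarrow> nat set \<Rightarrow> (nat \<Rightarrow> real) \<Rightarrow> real \<Rightarrow> (nat \<Rightarrow> real) \<Rightarrow> real" where
  "fbar n m J h g u S q xu xS =
     lam n m J h g S xS q *
     (sigmoid (2 * xu * (row_dot m J u q + h u))
      - (\<Sum>q'\<in>spins m. lam n m J h g S xS q' * sigmoid (2 * xu * (row_dot m J u q' + h u))))"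

end

theory Submission imports Defs begin

(* Fix the hidden configuration q and sum the joint weight over the observed configurations
   that agree with prescribed spins on A \<union> S.  The weight factorises over the observed
   coordinates, with factor exp (x_i a_i) where a_i = J^(i) . q + h_i, so the sum is a product:
   a free coordinate contributes 2 cosh a_i, a clamped one exp (x_i a_i), and for x_i = +-1 the
   latter equals 2 cosh a_i sigma (2 x_i a_i).  Hence, given X_S = x_S, the event X_A = c has
   probability sum_q lambda (q, x_S) prod_(i:A) sigma (2 c_i a_i).  Taking A = {u} \<union> I, {u}
   and I turns nu into the covariance of sigma (2 x_u a_u) and prod_(i:I) sigma (2 x_i a_i)
   under lambda (., x_S), which is the claimed sum. *)

lemma finite_spins: "finite (spins k)"
  unfolding spins_def by (rule finite_PiE) auto

lemma spins_nonempty: "spins k \<noteq> {}"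
  unfolding spins_def by (simp add: PiE_eq_empty_iff)

lemma rbm_weight_eq_prod:
  "rbm_weight n m J h g x y = exp (\<Sum>j<m. g j * y j) * (\<Prod>i<n. exp (x i * (row_dot m J i y + h i)))"
proof -
  have "(\<Sum>i<n. \<Sum>j<m. x i * J i j * y j) + (\<Sum>i<n. h i * x i) = (\<Sum>i<n. x i * (row_dot m J i y + h i))"
    by (simp add: row_dot_def sum_distrib_left sum.distrib algebra_simps)
  then show ?thesis
    unfolding rbm_weight_def by (simp add: exp_add exp_sum mult.commute)
qed

lemma rbm_partition_pos: "(\<Sum>x\<in>spins n. \<Sum>y\<in>spins m. rbm_weight n m J h g x y) > 0"
  by (intro sum_pos finite_spins spins_nonempty) (auto simp: rbm_weight_def)

lemma spins_clamped_eq_PiE: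
  assumes "B \<subseteq> {0..<n}" and "\<forall>i\<in>B. d i \<in> {-1, 1}"
  shows "{x \<in> spins n. \<forall>i\<in>B. x i = d i} = PiE {0..<n} (\<lambda>i. if i \<in> B then {d i} else {-1, 1})"
  using assms unfolding spins_def
  by (fastforce simp: PiE_iff extensional_def split: if_splits)

lemma sum_spins_clamped_prod:
  fixes f :: "nat \<Rightarrow> real \<Rightarrow> 'a::comm_semiring_1"
  assumes "B \<subseteq> {0..<n}" and "\<forall>i\<in>B. d i \<in> {-1, 1}"
  shows "(\<Sum>x \<in> {x \<in> spins n. \<forall>i\<in>B. x i = d i}. \<Prod>i<n. f i (x i))
       = (\<Prod>i<n. if i \<in> B then f i (d i) else f i 1 + f i (-1))"
proof -
  have "(\<Prod>i<n. if i \<in> B then f i (d i) else f i 1 + f i (-1))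
      = (\<Prod>i\<in>{0..<n}. \<Sum>b \<in> (if i \<in> B then {d i} else {-1, 1}). f i b)"
    by (intro prod.cong) (auto simp: atLeast0LessThan add.commute)
  also have "\<dots> = (\<Sum>x \<in> PiE {0..<n} (\<lambda>i. if i \<in> B then {d i} else {-1, 1}). \<Prod>i\<in>{0..<n}. f i (x i))"
    by (rule prod_sum_PiE) auto
  finally show ?thesis
    by (simp add: spins_clamped_eq_PiE[OF assms] atLeast0LessThan)
qed

lemma two_cosh_mult_sigmoid: "2 * cosh a * sigmoid (2 * a) = exp a"
proof -
  have "2 * cosh a = exp a * (1 + exp (- (2 * a)))"
    by (simp add: cosh_def distrib_left exp_add[symmetric])
  moreover have "1 + exp (- (2 * a)) > 0"
    by (simp add: add_pos_pos)
  ultimately show ?thesis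
    by (simp add: sigmoid_def)
qed

lemma exp_spin_eq_cosh_sigmoid:
  assumes "c \<in> {-1, 1::real}"
  shows "exp (c * a) = 2 * cosh a * sigmoid (2 * c * a)"
  using assms two_cosh_mult_sigmoid[of a] two_cosh_mult_sigmoid[of "- a"] by auto

lemma sum_clamped_rbm_weight:
  assumes A: "A \<subseteq> {0..<n}" and S: "S \<subseteq> {0..<n}" and AS: "A \<inter> S = {}"
    and c: "\<forall>i\<in>A. c i \<in> {-1, 1}" and xS: "\<forall>i\<in>S. xS i \<in> {-1, 1}"
  shows "(\<Sum>x \<in> {x \<in> spins n. (\<forall>i\<in>A. x i = c i) \<and> (\<forall>i\<in>S. x i = xS i)}. rbm_weight n m J h g x q)
       = 2 ^ card ({0..<n} - S) * lam_num n m J h g S xS q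
         * (\<Prod>i\<in>A. sigmoid (2 * c i * (row_dot m J i q + h i)))"
proof -
  define a where "a i = row_dot m J i q + h i" for i
  define d where "d i = (if i \<in> A then c i else xS i)" for i
  have clamped: "{x \<in> spins n. (\<forall>i\<in>A. x i = c i) \<and> (\<forall>i\<in>S. x i = xS i)}
               = {x \<in> spins n. \<forall>i \<in> A \<union> S. x i = d i}"
    using AS by (auto simp: d_def)
  have "(\<Sum>x \<in> {x \<in> spins n. \<forall>i \<in> A \<union> S. x i = d i}. rbm_weight n m J h g x q)
      = exp (\<Sum>j<m. g j * q j) * (\<Sum>x \<in> {x \<in> spins n. \<forall>i \<in> A \<union> S. x i = d i}. \<Prod>i<n. exp (x i * a i))"
    by (simp add: rbm_weight_eq_prod sum_distrib_left a_def)
  also have "(\<Sum>x \<in> {x \<in> spins n. \<forall>i \<in> A \<union> S. x i = d i}. \<Prod>i<n. exp (x i * a i))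
      = (\<Prod>i<n. if i \<in> A \<union> S then exp (d i * a i) else exp (1 * a i) + exp (-1 * a i))"
    using A S c xS by (intro sum_spins_clamped_prod) (auto simp: d_def)
  also have "\<dots> = (\<Prod>i<n. (if i \<in> S then exp (xS i * a i) else 2 * cosh (a i))
                         * (if i \<in> A then sigmoid (2 * c i * a i) else 1))"
    using AS c exp_spin_eq_cosh_sigmoid by (intro prod.cong) (auto simp: d_def cosh_def)
  also have "\<dots> = (\<Prod>i\<in>S. exp (xS i * a i)) * (\<Prod>i \<in> {0..<n} - S. 2 * cosh (a i))
                 * (\<Prod>i\<in>A. sigmoid (2 * c i * a i))"
  proof -
    have "{..<n} \<inter> S = S" "{..<n} \<inter> A = A" "{..<n} - S = {0..<n} - S"
      using A S by auto
    then show ?thesis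
      by (simp add: prod.distrib prod.If_cases Diff_eq)
  qed
  finally show ?thesis
    unfolding clamped lam_num_def a_def[symmetric] by (simp add: prod.distrib mult_ac)
qed

lemma rbm_cond_clamped:
  assumes "A \<subseteq> {0..<n}" and S: "S \<subseteq> {0..<n}" and "A \<inter> S = {}"
    and "\<forall>i\<in>A. c i \<in> {-1, 1}" and xS: "\<forall>i\<in>S. xS i \<in> {-1, 1}"
  shows "rbm_cond n m J h g (\<lambda>x. \<forall>i\<in>A. x i = c i) (\<lambda>x. \<forall>i\<in>S. x i = xS i)
       = (\<Sum>q\<in>spins m. lam n m J h g S xS q * (\<Prod>i\<in>A. sigmoid (2 * c i * (row_dot m J i q + h i))))"
proof -
  let ?C = "(2::real) ^ card ({0..<n} - S)"
  let ?L = "lam_num n m J h g S xS"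
  let ?P = "\<lambda>q. \<Prod>i\<in>A. sigmoid (2 * c i * (row_dot m J i q + h i))"
  have "(\<Sum>x \<in> {x \<in> spins n. (\<forall>i\<in>A. x i = c i) \<and> (\<forall>i\<in>S. x i = xS i)}. \<Sum>y\<in>spins m. rbm_weight n m J h g x y)
      = ?C * (\<Sum>q\<in>spins m. ?L q * ?P q)"
    using sum_clamped_rbm_weight[OF assms]
    by (subst sum.swap) (simp add: sum_distrib_left mult.assoc)
  moreover have "(\<Sum>x \<in> {x \<in> spins n. \<forall>i\<in>S. x i = xS i}. \<Sum>y\<in>spins m. rbm_weight n m J h g x y)
      = ?C * (\<Sum>q\<in>spins m. ?L q)"
    using sum_clamped_rbm_weight[of "{}" n S c xS m J h g] S xS
    by (subst sum.swap) (simp add: sum_distrib_left)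
  ultimately show ?thesis
    using rbm_partition_pos[of n m J h g]
    by (simp add: rbm_cond_def rbm_prob_def lam_def sum_divide_distrib)
qed

theorem lemma7:
  fixes n m :: nat and J :: "nat \<Rightarrow> nat \<Rightarrow> real" and h g :: "nat \<Rightarrow> real"
    and u :: nat and I S :: "nat set" and xu :: real and xI xS :: "nat \<Rightarrow> real"
  assumes "u < n" and "I \<subseteq> {0..<n}" and "S \<subseteq> {0..<n}"
    and "u \<notin> I" and "u \<notin> S" and "I \<inter> S = {}"
    and "xu \<in> {-1, 1}" and "\<forall>i\<in>I. xI i \<in> {-1, 1}" and "\<forall>i\<in>S. xS i \<in> {-1, 1}"
  shows "rbm_nu n m J h g u I S xu xI xS =
         \<bar>\<Sum>q\<in>spins m. fbar n m J h g u S q xu xS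
             * (\<Prod>i\<in>I. sigmoid (2 * xI i * (row_dot m J i q + h i)))\<bar>"
proof -
  let ?L = "lam n m J h g S xS"
  let ?\<sigma>u = "\<lambda>q. sigmoid (2 * xu * (row_dot m J u q + h u))"
  let ?P = "\<lambda>q. \<Prod>i\<in>I. sigmoid (2 * xI i * (row_dot m J i q + h i))"
  let ?ES = "\<lambda>x. \<forall>i\<in>S. x i = xS i"
  have "finite I"
    using assms(2) finite_subset by blast
  have joint_event: "(\<lambda>x. x u = xu \<and> (\<forall>i\<in>I. x i = xI i)) = (\<lambda>x. \<forall>i \<in> insert u I. x i = (xI(u := xu)) i)"
    using \<open>u \<notin> I\<close> by (auto simp: fun_eq_iff)
  have "rbm_cond n m J h g (\<lambda>x. \<forall>i \<in> insert u I. x i = (xI(u := xu)) i) ?ES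
      = (\<Sum>q\<in>spins m. ?L q * (\<Prod>i \<in> insert u I. sigmoid (2 * (xI(u := xu)) i * (row_dot m J i q + h i))))"
    using assms by (intro rbm_cond_clamped) auto
  also have "\<dots> = (\<Sum>q\<in>spins m. ?L q * (?\<sigma>u q * ?P q))"
  proof -
    have "(\<Prod>i\<in>I. sigmoid (2 * (xI(u := xu)) i * (row_dot m J i q + h i))) = ?P q" for q
      using \<open>u \<notin> I\<close> by (intro prod.cong) auto
    then show ?thesis
      using \<open>finite I\<close> \<open>u \<notin> I\<close> by simp
  qed
  finally have joint: "rbm_cond n m J h g (\<lambda>x. x u = xu \<and> (\<forall>i\<in>I. x i = xI i)) ?ES
      = (\<Sum>q\<in>spins m. ?L q * (?\<sigma>u q * ?P q))"
    unfolding joint_event .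
  have single: "rbm_cond n m J h g (\<lambda>x. x u = xu) ?ES = (\<Sum>q\<in>spins m. ?L q * ?\<sigma>u q)"
    using assms rbm_cond_clamped[of "{u}" n S "\<lambda>_. xu" xS m J h g] by simp
  have marginal: "rbm_cond n m J h g (\<lambda>x. \<forall>i\<in>I. x i = xI i) ?ES = (\<Sum>q\<in>spins m. ?L q * ?P q)"
    using assms by (intro rbm_cond_clamped) auto
  have "(\<Sum>q\<in>spins m. fbar n m J h g u S q xu xS * ?P q)
      = (\<Sum>q\<in>spins m. ?L q * (?\<sigma>u q * ?P q)) - (\<Sum>q\<in>spins m. ?L q * ?\<sigma>u q) * (\<Sum>q\<in>spins m. ?L q * ?P q)"
    by (simp add: fbar_def algebra_simps sum_subtractf sum_distrib_left sum_distrib_right)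
  then show ?thesis
    unfolding rbm_nu_def Let_def joint single marginal by simp
qed

end
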